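(* At any time $t$, after the incremental maintenance of the random RR sets under the LT model described in the context, $n\mathcal{F_R}(S)$ is an unbiased estimator of $I(S)$ for any seed set $S$.
   Context: Setting: a directed network $G=\langle V,E,w\rangle$ with $n=|V|$ nodes under the Linear Threshold (LT) model. Each edge $(u,v)$ has weight $w_{uv}\ge 0$, each node $v$ has a self-weight $w_v$ (treated as $w_{vv}$, i.e. $v$ is regarded as an in-neighbor of itself), and $W_v=w_v+\sum_{u\in N^{in}(v)}w_{uv}$ is the total weight of $v$; the influence probability of $(u,v)$ is $p_{uv}=w_{uv}/W_v$. In the equivalent live-edge process each node $v$ picks at most one incoming edge $(u,v)$ as live with probability $p_{uv}$ (picking none, i.e. picking itself, with probability $w_v/W_v$). $I(S)$ is the influence spread of seed set $S$ (expected number of nodes reachable from $S$ via live edges). A random RR (Reversely Reachable) set is obtained by picking a node uniformly at random and collecting the nodes that reach it via live edges; under LT it is a simple path, and for each node on it the chosen previous node is stored. Given a collection $\mathcal{R}$ of $M$ RR sets, $\mathcal{F_R}(S)=\mathcal{D}(S)/M$, where $\mathcal{D}(S)$ is the number of RR sets containing at least one node of $S$. The network is dynamic: a stream of weight updates $(u,v,+/-,\Delta,t)$ changes $w_{uv}$ (or $w_v$ if $u=v$) by $\pm\Delta$ at time $t$; $w^t_{uv}$ and $W^t_v$ denote values at time $t$. Incremental maintenance after updating the graph: (1) for a weight increase $(u,v,+,\Delta,t)$, every RR set passing $v$ is, with probability $\Delta/W_v^t$, rerouted from $v$: the previous node of $v$ is set to $u$ and reverse propagation continues until no new node is reached; (2)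 for a weight decrease $(u,v,-,\Delta,t)$, every RR set passing $v$ whose previous node of $v$ is $u$ is, with probability $\Delta/w_{uv}^{t-1}$, rerouted from $v$: a new previous node $u'$ among $v$'s in-neighbors (including $v$ itself) is chosen with probability $w_{u'v}^t/W_v^t$, and reverse propagation continues until no new node is reached. At time 0 the network has no edges. *)

theory Defs
  imports "HOL-Probability.Probability"
begin

(* Weights: w u v is the weight of edge (u,v) for u \<noteq> v; w v v is the self-weight w_v. *)
type_synonym 'v weights = "'v \<Rightarrow> 'v \<Rightarrow> real"

(* An update (u, v, inc, \<Delta>): inc = True means '+', inc = False means '-'. *)
type_synonym 'v update = "'v \<times> 'v \<times> bool \<times> real"

definition lt_W :: "('v::finite) weights \<Rightarrow> 'v \<Rightarrow> real" where
  "lt_W w v = (\<Sum>u\<in>UNIV. w u v)"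

(* the random choice of v's previous node in the live-edge process:
   u with probability w u v / W_v (u = v means: no live incoming edge).
   Convention: if W_v = 0, v picks itself. *)
definition lt_choice :: "('v::finite) weights \<Rightarrow> 'v \<Rightarrow> 'v pmf" where
  "lt_choice w v = (if lt_W w v > 0 then embed_pmf (\<lambda>u. w u v / lt_W w v) else return_pmf v)"

definition live_edge_pmf :: "('v::finite) weights \<Rightarrow> ('v \<Rightarrow> 'v) pmf" where
  "live_edge_pmf w = Pi_pmf UNIV undefined (\<lambda>v. lt_choice w v)"

definition activated :: "('v \<Rightarrow> 'v) \<Rightarrow> 'v set \<Rightarrow> 'v set" where
  "activated prev S = {x. \<exists>k. (prev ^^ k) x \<in> S}"

definition influence :: "('v::finite) weights \<Rightarrow> 'v set \<Rightarrow> real" where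
  "influence w S = measure_pmf.expectation (live_edge_pmf w) (\<lambda>prev. real (card (activated prev S)))"

(* An RR set state (xs, l): xs = [x0, ..., xk] is the simple path in reverse-propagation
   order (x0 the root); the stored previous node of x_i is x_(i+1) for i < k, and l for x_k
   (l = x_k: picked itself; otherwise l is an already visited node). *)
type_synonym 'v rr_state = "'v list \<times> 'v"

(* Reverse propagation: pre are the visited nodes, x is the current node.
   The nat argument is fuel; CARD('v) always suffices. *)
fun rr_walk :: "nat \<Rightarrow> ('v::finite) weights \<Rightarrow> 'v list \<Rightarrow> 'v \<Rightarrow> 'v rr_state pmf" where
  "rr_walk 0 w pre x = return_pmf (pre @ [x], x)"
| "rr_walk (Suc k) w pre x =
     bind_pmf (lt_choice w x) (\<lambda>p.
       if p \<in> set (pre @ [x]) then return_pmf (pre @ [x], p)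
       else rr_walk k w (pre @ [x]) p)"

definition rr_sample :: "('v::finite) weights \<Rightarrow> 'v rr_state pmf" where
  "rr_sample w = bind_pmf (pmf_of_set UNIV) (\<lambda>r. rr_walk CARD('v) w [] r)"

definition rr_prev :: "'v rr_state \<Rightarrow> 'v \<Rightarrow> 'v" where
  "rr_prev R v = (if v = last (fst R) then snd R
                  else hd (tl (dropWhile (\<lambda>y. y \<noteq> v) (fst R))))"

definition rr_reroute :: "('v::finite) weights \<Rightarrow> 'v list \<Rightarrow> 'v \<Rightarrow> 'v \<Rightarrow> 'v rr_state pmf" where
  "rr_reroute w xs v p =
     (let pre = takeWhile (\<lambda>y. y \<noteq> v) xs @ [v] in
      if p \<in> set pre then return_pmf (pre, p) else rr_walk CARD('v) w pre p)"

definition apply_update :: "'v update \<Rightarrow> 'v weights \<Rightarrow> 'v weights" where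
  "apply_update upd w = (case upd of (u, v, inc, \<Delta>) \<Rightarrow>
     w(u := (w u)(v := (if inc then w u v + \<Delta> else w u v - \<Delta>))))"

definition weights_at :: "'v weights \<Rightarrow> 'v update list \<Rightarrow> nat \<Rightarrow> 'v weights" where
  "weights_at w0 ups t = foldl (\<lambda>w upd. apply_update upd w) w0 (take t ups)"

definition rr_maintain :: "('v::finite) weights \<Rightarrow> 'v update \<Rightarrow> 'v rr_state \<Rightarrow> 'v rr_state pmf" where
  "rr_maintain w upd R = (case upd of (u, v, inc, \<Delta>) \<Rightarrow>
     (let w' = apply_update upd w in
      if v \<notin> set (fst R) then return_pmf R
      else if inc then
        bind_pmf (bernoulli_pmf (\<Delta> / lt_W w' v))
          (\<lambda>b. if b then rr_reroute w' (fst R) v u else return_pmf R)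
      else if rr_prev R v = u then
        bind_pmf (bernoulli_pmf (\<Delta> / w u v))
          (\<lambda>b. if b then bind_pmf (lt_choice w' v) (\<lambda>u'. rr_reroute w' (fst R) v u')
               else return_pmf R)
      else return_pmf R))"

fun pmf_mapM :: "('a \<Rightarrow> 'b pmf) \<Rightarrow> 'a list \<Rightarrow> 'b list pmf" where
  "pmf_mapM f [] = return_pmf []"
| "pmf_mapM f (x # xs) = bind_pmf (f x) (\<lambda>y. map_pmf (\<lambda>ys. y # ys) (pmf_mapM f xs))"

fun rr_collection :: "('v::finite) weights \<Rightarrow> 'v update list \<Rightarrow> nat \<Rightarrow> nat \<Rightarrow> 'v rr_state list pmf" where
  "rr_collection w0 ups M 0 = pmf_mapM (\<lambda>_. rr_sample w0) [0..<M]"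
| "rr_collection w0 ups M (Suc t) =
     bind_pmf (rr_collection w0 ups M t)
       (\<lambda>Rs. pmf_mapM (rr_maintain (weights_at w0 ups t) (ups ! t)) Rs)"

definition F_R :: "'v rr_state list \<Rightarrow> 'v set \<Rightarrow> real" where
  "F_R Rs S = real (length (filter (\<lambda>R. set (fst R) \<inter> S \<noteq> {}) Rs)) / real (length Rs)"

end

theory Submission
  imports Defs
begin

text \<open>
  Run on a fixed live-edge sample \<sigma>, reverse propagation from a root r follows r, \<sigma> r,
  \<sigma> (\<sigma> r), ... until a node repeats, so it collects exactly the nodes from which r is
  reached via live edges. Hence a fresh RR set meets S with probability I(S)/n, and unbiasedness
  at time t reduces to showing that maintained RR sets are distributed as fresh RR sets for the
  current weights. This holds update by update: reverse propagation is Markov, so an update of the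
  in-weights of v only concerns the stored previous node of v, and maintenance redraws that node so
  that its law becomes the new choice law of v. For an increase, u replaces the old choice with
  probability \<Delta>/W_v (new total weight); for a decrease, an old choice u is redrawn from the new
  law with probability \<Delta>/w_uv (old weight), which removes exactly the surplus mass \<Delta>/W_v
  (old total weight) of u and spreads it according to the new law.
\<close>

lemma apply_update_apply:
  "apply_update (u, v, inc, \<Delta>) w a b =
     (if a = u \<and> b = v then (if inc then w u v + \<Delta> else w u v - \<Delta>) else w a b)"
  by (simp add: apply_update_def)

lemma lt_W_nonneg:
  fixes w :: "('v::finite) weights"
  assumes "\<And>y. w y v \<ge> 0"
  shows "lt_W w v \<ge> 0"
  unfolding lt_W_def using assms by (simp add: sum_nonneg)

lemma weight_le_lt_W:
  fixes w :: "('v::finite) weights"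
  assumes "\<And>y. w y v \<ge> 0"
  shows "w u v \<le> lt_W w v"
  unfolding lt_W_def using assms by (intro member_le_sum) auto

lemma lt_W_eq_0_imp_weight_eq_0:
  fixes w :: "('v::finite) weights"
  assumes "\<And>y. w y v \<ge> 0" and "lt_W w v = 0"
  shows "w y v = 0"
  using assms sum_nonneg_eq_0_iff[of UNIV "\<lambda>y. w y v"] by (simp add: lt_W_def)

lemma lt_W_apply_update:
  fixes w :: "('v::finite) weights"
  shows "lt_W (apply_update (u, v, inc, \<Delta>) w) v = (if inc then lt_W w v + \<Delta> else lt_W w v - \<Delta>)"
proof -
  have "lt_W (apply_update (u, v, inc, \<Delta>) w) v
      = (\<Sum>y\<in>UNIV. w y v + (if y = u then (if inc then \<Delta> else -\<Delta>) else 0))"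
    unfolding lt_W_def by (intro sum.cong) (auto simp: apply_update_apply)
  then show ?thesis by (simp add: sum.distrib lt_W_def)
qed

lemma lt_choice_apply_update_other:
  fixes w :: "('v::finite) weights"
  assumes "x \<noteq> v"
  shows "lt_choice (apply_update (u, v, inc, \<Delta>) w) x = lt_choice w x"
proof -
  have "(\<lambda>y. apply_update (u, v, inc, \<Delta>) w y x) = (\<lambda>y. w y x)"
    using assms by (auto simp: apply_update_apply)
  then show ?thesis unfolding lt_choice_def lt_W_def by metis
qed

lemma pmf_lt_choice:
  fixes w :: "('v::finite) weights"
  assumes nonneg: "\<And>y. w y v \<ge> 0" and pos: "lt_W w v > 0"
  shows "pmf (lt_choice w v) y = w y v / lt_W w v"
proof -
  have "(\<integral>\<^sup>+x. ennreal (w x v / lt_W w v) \<partial>count_space UNIV) = ennreal (\<Sum>x\<in>UNIV. w x v / lt_W w v)"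
    using nonneg pos by (simp add: nn_integral_count_space_finite sum_ennreal)
  also have "(\<Sum>x\<in>UNIV. w x v / lt_W w v) = 1"
    using pos by (simp add: sum_divide_distrib[symmetric] lt_W_def)
  finally show ?thesis
    using nonneg pos unfolding lt_choice_def by (simp add: pmf_embed_pmf)
qed

lemma pmf_lt_choice_redistribute:
  fixes w :: "('v::finite) weights"
  assumes nonneg: "\<And>y. w y v \<ge> 0" and pos: "\<Delta> > 0"
  shows "(w y v + \<Delta> * pmf (lt_choice w v) y) / (lt_W w v + \<Delta>) = pmf (lt_choice w v) y"
proof (cases "lt_W w v = 0")
  case True
  then show ?thesis
    using lt_W_eq_0_imp_weight_eq_0[of w v, OF nonneg] pos by (simp add: lt_choice_def)
next
  case False
  then have W: "lt_W w v > 0" using lt_W_nonneg[of w v, OF nonneg] by simp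
  then have "w y v + \<Delta> * (w y v / lt_W w v) = w y v / lt_W w v * (lt_W w v + \<Delta>)"
    by (simp add: field_simps)
  then show ?thesis using W pos by (simp add: pmf_lt_choice[of w v, OF nonneg])
qed

text \<open>The law of the stored previous node of v after maintenance, given its previous value p.\<close>

definition maintained_prev :: "('v::finite) weights \<Rightarrow> 'v update \<Rightarrow> 'v \<Rightarrow> 'v pmf" where
  "maintained_prev w upd p = (case upd of (u, v, inc, \<Delta>) \<Rightarrow>
     (let w' = apply_update upd w in
      if inc then map_pmf (\<lambda>b. if b then u else p) (bernoulli_pmf (\<Delta> / lt_W w' v))
      else if p = u then
        bind_pmf (bernoulli_pmf (\<Delta> / w u v)) (\<lambda>b. if b then lt_choice w' v else return_pmf u)
      else return_pmf p))"

lemma lt_choice_increase: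
  fixes w :: "('v::finite) weights" and u v :: 'v
  assumes nonneg: "\<And>y. w y v \<ge> 0" and pos: "\<Delta> > 0"
  defines "w' \<equiv> apply_update (u, v, True, \<Delta>) w"
  shows "lt_choice w' v =
    bind_pmf (bernoulli_pmf (\<Delta> / lt_W w' v)) (\<lambda>b. if b then return_pmf u else lt_choice w v)"
proof (rule pmf_eqI)
  fix y
  have W': "lt_W w' v = lt_W w v + \<Delta>" unfolding w'_def by (simp add: lt_W_apply_update)
  have W: "lt_W w v \<ge> 0" using nonneg by (rule lt_W_nonneg)
  have nonneg': "\<And>y. w' y v \<ge> 0"
    using nonneg pos by (auto simp: w'_def apply_update_apply intro: add_nonneg_nonneg)
  have q: "0 \<le> \<Delta> / lt_W w' v" "\<Delta> / lt_W w' v \<le> 1" using W' W pos by auto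
  have "pmf (bind_pmf (bernoulli_pmf (\<Delta> / lt_W w' v))
                (\<lambda>b. if b then return_pmf u else lt_choice w v)) y
      = indicator {u} y * (\<Delta> / lt_W w' v) + pmf (lt_choice w v) y * (1 - \<Delta> / lt_W w' v)"
    using q by (simp add: pmf_bind integral_measure_pmf_real[where A = UNIV] UNIV_bool
        pmf_return indicator_def)
  also have "\<dots> = w' y v / lt_W w' v"
  proof (cases "lt_W w v = 0")
    case True
    then have "\<And>z. w z v = 0" using lt_W_eq_0_imp_weight_eq_0 nonneg by blast
    then show ?thesis
      using True W' pos
      by (simp add: lt_choice_def w'_def apply_update_apply indicator_def pmf_return)
  next
    case False
    then have "lt_W w v > 0" using W by simp
    moreover have "1 - \<Delta> / lt_W w' v = lt_W w v / lt_W w' v"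
      using W' W pos by (simp add: field_simps)
    ultimately show ?thesis using W' pos
      by (auto simp: pmf_lt_choice nonneg w'_def apply_update_apply indicator_def
          add_divide_distrib)
  qed
  also have "\<dots> = pmf (lt_choice w' v) y" using W' W pos nonneg' by (simp add: pmf_lt_choice)
  finally show "pmf (lt_choice w' v) y = pmf (bind_pmf (bernoulli_pmf (\<Delta> / lt_W w' v))
      (\<lambda>b. if b then return_pmf u else lt_choice w v)) y" ..
qed

lemma lt_choice_decrease:
  fixes w :: "('v::finite) weights" and u v :: 'v
  assumes nonneg: "\<And>y. w y v \<ge> 0" and pos: "\<Delta> > 0" and le: "\<Delta> \<le> w u v"
  defines "w' \<equiv> apply_update (u, v, False, \<Delta>) w"
  shows "lt_choice w' v = bind_pmf (lt_choice w v) (\<lambda>p. if p = u then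
            bind_pmf (bernoulli_pmf (\<Delta> / w u v)) (\<lambda>b. if b then lt_choice w' v else return_pmf u)
            else return_pmf p)" (is "_ = bind_pmf _ ?F")
proof (rule pmf_eqI)
  fix y
  define W where "W = lt_W w v"
  have W': "lt_W w' v = W - \<Delta>" unfolding w'_def W_def by (simp add: lt_W_apply_update)
  have "w u v \<le> W" unfolding W_def using nonneg by (rule weight_le_lt_W)
  then have W_pos: "W > 0" using le pos by auto
  have nonneg': "\<And>y. w' y v \<ge> 0" using nonneg le by (auto simp: w'_def apply_update_apply)
  have choice_u: "pmf (lt_choice w v) u = w u v / W"
    using W_pos unfolding W_def by (rule pmf_lt_choice[of w v, OF nonneg])
  have F_u: "pmf (?F u) y = \<Delta> / w u v * pmf (lt_choice w' v) y + (1 - \<Delta> / w u v) * indicator {u} y"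
    using le pos by (simp add: pmf_bind integral_measure_pmf_real[where A=UNIV] UNIV_bool
        pmf_return indicator_def)
  have "pmf (bind_pmf (lt_choice w v) ?F) y = (\<Sum>p\<in>UNIV. pmf (?F p) y * pmf (lt_choice w v) p)"
    by (simp add: pmf_bind integral_measure_pmf_real[where A=UNIV])
  also have "\<dots> = pmf (?F u) y * pmf (lt_choice w v) u
                    + (\<Sum>p\<in>UNIV-{u}. pmf (?F p) y * pmf (lt_choice w v) p)"
    by (simp add: sum.remove[of UNIV u])
  also have "(\<Sum>p\<in>UNIV-{u}. pmf (?F p) y * pmf (lt_choice w v) p) = (if y = u then 0 else w y v / W)"
    by (subst sum.cong[OF refl, where h = "\<lambda>p. if p = y then w y v / W else 0"])
       (auto simp: pmf_return pmf_lt_choice nonneg W_pos W_def[symmetric] sum.delta)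
  also have "pmf (?F u) y * pmf (lt_choice w v) u + (if y = u then 0 else w y v / W)
      = (w' y v + \<Delta> * pmf (lt_choice w' v) y) / W"
    unfolding F_u choice_u using pos le W_pos
    by (cases "y = u") (auto simp: w'_def apply_update_apply field_simps)
  also have "\<dots> = pmf (lt_choice w' v) y"
    using pmf_lt_choice_redistribute[of w' v \<Delta> y] nonneg' pos W' by simp
  finally show "pmf (lt_choice w' v) y = pmf (bind_pmf (lt_choice w v) ?F) y" ..
qed

lemma bind_lt_choice_maintained_prev:
  fixes w :: "('v::finite) weights" and u v :: 'v
  assumes nonneg: "\<And>y. w y v \<ge> 0" and pos: "\<Delta> > 0" and le: "\<not> inc \<Longrightarrow> \<Delta> \<le> w u v"
  shows "bind_pmf (lt_choice w v) (maintained_prev w (u, v, inc, \<Delta>))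
       = lt_choice (apply_update (u, v, inc, \<Delta>) w) v"
proof (cases inc)
  case True
  define B where "B = bernoulli_pmf (\<Delta> / lt_W (apply_update (u, v, True, \<Delta>) w) v)"
  have prev: "maintained_prev w (u, v, inc, \<Delta>)
      = (\<lambda>p. bind_pmf B (\<lambda>b. return_pmf (if b then u else p)))"
    using True by (simp add: maintained_prev_def map_pmf_def B_def fun_eq_iff)
  have "bind_pmf (lt_choice w v) (maintained_prev w (u, v, inc, \<Delta>))
      = bind_pmf B (\<lambda>b. if b then return_pmf u else lt_choice w v)"
    unfolding prev by (subst bind_commute_pmf) (auto simp: bind_return_pmf' intro: bind_pmf_cong)
  then show ?thesis
    using True lt_choice_increase[where w = w and u = u and v = v, OF nonneg pos]
    by (simp add: B_def)
next
  case False
  then show ?thesis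
    using lt_choice_decrease[where w = w and u = u and v = v, OF nonneg pos le]
    by (simp add: maintained_prev_def[abs_def] Let_def)
qed

lemma length_less_CARD_if_distinct:
  fixes pre :: "('v::finite) list"
  assumes "distinct (pre @ [x])"
  shows "length pre < CARD('v)"
proof -
  have "length (pre @ [x]) = card (set (pre @ [x]))" using assms by (simp add: distinct_card)
  also have "\<dots> \<le> CARD('v)" by (rule card_mono) auto
  finally show ?thesis by simp
qed

lemma rr_walk_fuel_cong:
  fixes pre :: "('v::finite) list"
  assumes "distinct (pre @ [x])" "CARD('v) \<le> length pre + k" "CARD('v) \<le> length pre + k'"
  shows "rr_walk k w pre x = rr_walk k' w pre x"
  using assms
proof (induction k arbitrary: k' pre x)
  case 0
  then show ?case using length_less_CARD_if_distinct[OF "0.prems"(1)] by simp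
next
  case (Suc k)
  show ?case
  proof (cases k')
    case 0
    then show ?thesis using length_less_CARD_if_distinct[OF Suc.prems(1)] Suc.prems(3) by simp
  next
    case (Suc k'')
    have "\<And>p. p \<notin> set (pre @ [x]) \<Longrightarrow> rr_walk k w (pre @ [x]) p = rr_walk k'' w (pre @ [x]) p"
      using Suc.prems Suc by (intro Suc.IH) auto
    then show ?thesis using Suc by (auto intro!: bind_pmf_cong)
  qed
qed

lemma rr_walk_choice_cong:
  assumes "\<And>y. y \<notin> set pre \<Longrightarrow> lt_choice w y = lt_choice w' y" "x \<notin> set pre"
  shows "rr_walk k w pre x = rr_walk k w' pre x"
  using assms
proof (induction k arbitrary: pre x)
  case 0
  then show ?case by simp
next
  case (Suc k)
  have "\<And>p. p \<notin> set (pre @ [x]) \<Longrightarrow> rr_walk k w (pre @ [x]) p = rr_walk k w' (pre @ [x]) p"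
    using Suc.prems by (intro Suc.IH) auto
  then show ?case using Suc.prems by (auto intro!: bind_pmf_cong)
qed

lemma set_pmf_rr_walk:
  assumes "R \<in> set_pmf (rr_walk k w pre x)" "distinct (pre @ [x])"
  shows "\<exists>ys. fst R = pre @ x # ys \<and> distinct (fst R)"
  using assms
proof (induction k arbitrary: pre x)
  case 0
  then show ?case by auto
next
  case (Suc k)
  then obtain p where R: "R \<in> set_pmf (if p \<in> set (pre @ [x]) then return_pmf (pre @ [x], p)
                                          else rr_walk k w (pre @ [x]) p)"
    by auto
  show ?case
  proof (cases "p \<in> set (pre @ [x])")
    case True
    then show ?thesis using R Suc.prems(2) by auto
  next
    case False
    then have "R \<in> set_pmf (rr_walk k w (pre @ [x]) p)" "distinct ((pre @ [x]) @ [p])"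
      using R Suc.prems(2) by auto
    then have "\<exists>ys. fst R = (pre @ [x]) @ p # ys \<and> distinct (fst R)" by (rule Suc.IH)
    then show ?thesis by auto
  qed
qed

definition rr_continue :: "('v::finite) weights \<Rightarrow> 'v list \<Rightarrow> 'v \<Rightarrow> 'v \<Rightarrow> 'v rr_state pmf" where
  "rr_continue w pre x p =
     (if p \<in> set (pre @ [x]) then return_pmf (pre @ [x], p) else rr_walk CARD('v) w (pre @ [x]) p)"

lemma rr_walk_CARD_eq_bind_rr_continue:
  fixes w :: "('v::finite) weights"
  assumes "distinct (pre @ [x])"
  shows "rr_walk CARD('v) w pre x = bind_pmf (lt_choice w x) (rr_continue w pre x)"
proof -
  obtain k where k: "CARD('v) = Suc k" using not0_implies_Suc by fastforce
  have fuel: "rr_walk k w (pre @ [x]) p = rr_walk CARD('v) w (pre @ [x]) p"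
    if "p \<notin> set (pre @ [x])" for p
    using that assms length_less_CARD_if_distinct[OF assms] k by (intro rr_walk_fuel_cong) auto
  have "rr_walk CARD('v) w pre x = rr_walk (Suc k) w pre x" by (simp only: k)
  also have "\<dots> = bind_pmf (lt_choice w x) (rr_continue w pre x)"
    using fuel by (auto simp: rr_continue_def intro!: bind_pmf_cong)
  finally show ?thesis .
qed

lemma rr_continue_choice_cong:
  assumes "\<And>y. y \<notin> set (pre @ [x]) \<Longrightarrow> lt_choice w y = lt_choice w' y"
  shows "rr_continue w pre x p = rr_continue w' pre x p"
  using assms rr_walk_choice_cong[of "pre @ [x]" w w' p] by (simp add: rr_continue_def)

lemma set_pmf_rr_continue:
  fixes w :: "('v::finite) weights"
  assumes R: "R \<in> set_pmf (rr_continue w pre v p)" and distinct: "distinct (pre @ [v])"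
  shows "v \<in> set (fst R)" "takeWhile (\<lambda>y. y \<noteq> v) (fst R) = pre" "rr_prev R v = p"
proof -
  have v: "v \<notin> set pre" using distinct by simp
  have path: "\<exists>ys. fst R = pre @ v # ys \<and> (if ys = [] then snd R = p else hd ys = p \<and> last ys \<noteq> v)"
  proof (cases "p \<in> set (pre @ [v])")
    case True
    then show ?thesis using R by (simp add: rr_continue_def)
  next
    case False
    then have "R \<in> set_pmf (rr_walk CARD('v) w (pre @ [v]) p)" "distinct ((pre @ [v]) @ [p])"
      using R distinct by (auto simp: rr_continue_def)
    then obtain zs where "fst R = (pre @ [v]) @ p # zs" "distinct (fst R)"
      using set_pmf_rr_walk by blast
    then show ?thesis by (intro exI[of _ "p # zs"]) auto
  qed
  then obtain ys where ys: "fst R = pre @ v # ys"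
    and prev: "if ys = [] then snd R = p else hd ys = p \<and> last ys \<noteq> v" by blast
  show "v \<in> set (fst R)" using ys by simp
  show "takeWhile (\<lambda>y. y \<noteq> v) (fst R) = pre" using ys v by (induction pre arbitrary: R) auto
  have "dropWhile (\<lambda>y. y \<noteq> v) (fst R) = v # ys" using ys v by (induction pre arbitrary: R) auto
  then show "rr_prev R v = p" using ys prev by (cases ys) (auto simp: rr_prev_def split: if_splits)
qed

lemma bind_pmf_resample:
  "bind_pmf A (\<lambda>R. bind_pmf B (\<lambda>b. if b then X else return_pmf R))
     = bind_pmf B (\<lambda>b. if b then X else A)"
  by (subst bind_commute_pmf) (auto simp: bind_return_pmf' intro: bind_pmf_cong)

lemma rr_maintain_off_path:
  "v \<notin> set (fst R) \<Longrightarrow> rr_maintain w (u, v, inc, \<Delta>) R = return_pmf R"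
  by (simp add: rr_maintain_def)

lemma rr_maintain_on_rr_continue:
  fixes w :: "('v::finite) weights" and u v :: 'v and inc :: bool and \<Delta> :: real
  defines "w' \<equiv> apply_update (u, v, inc, \<Delta>) w"
  assumes R: "R \<in> set_pmf (rr_continue w' pre v p)" and distinct: "distinct (pre @ [v])"
  shows "rr_maintain w (u, v, inc, \<Delta>) R =
    (if inc then
       bind_pmf (bernoulli_pmf (\<Delta> / lt_W w' v))
         (\<lambda>b. if b then rr_continue w' pre v u else return_pmf R)
     else if p = u then
       bind_pmf (bernoulli_pmf (\<Delta> / w u v))
         (\<lambda>b. if b then bind_pmf (lt_choice w' v) (rr_continue w' pre v) else return_pmf R)
     else return_pmf R)"
proof -
  have "v \<in> set (fst R)" "rr_reroute w' (fst R) v = rr_continue w' pre v" "rr_prev R v = p"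
    using set_pmf_rr_continue[OF R distinct]
    by (auto simp: rr_reroute_def rr_continue_def fun_eq_iff)
  then show ?thesis by (simp add: rr_maintain_def Let_def w'_def[symmetric] cong: if_cong)
qed

lemma rr_maintain_rr_continue:
  fixes w :: "('v::finite) weights" and u v :: 'v and inc :: bool and \<Delta> :: real
  defines "w' \<equiv> apply_update (u, v, inc, \<Delta>) w"
  assumes distinct: "distinct (pre @ [v])"
  shows "bind_pmf (rr_continue w' pre v p) (rr_maintain w (u, v, inc, \<Delta>))
       = bind_pmf (maintained_prev w (u, v, inc, \<Delta>) p) (rr_continue w' pre v)"
proof -
  let ?K = "rr_continue w' pre v"
  have maintain: "bind_pmf (?K p) (rr_maintain w (u, v, inc, \<Delta>)) = bind_pmf (?K p) (\<lambda>R.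
    if inc then bind_pmf (bernoulli_pmf (\<Delta> / lt_W w' v)) (\<lambda>b. if b then ?K u else return_pmf R)
    else if p = u then
      bind_pmf (bernoulli_pmf (\<Delta> / w u v))
        (\<lambda>b. if b then bind_pmf (lt_choice w' v) ?K else return_pmf R)
    else return_pmf R)"
    using rr_maintain_on_rr_continue[OF _ distinct] unfolding w'_def by (intro bind_pmf_cong) simp_all
  consider (increase) inc | (decrease_prev) "\<not> inc" "p = u" | (decrease_other) "\<not> inc" "p \<noteq> u"
    by blast
  then show ?thesis
  proof cases
    case increase
    show ?thesis
      unfolding maintain using increase
      by (simp add: bind_pmf_resample maintained_prev_def w'_def map_pmf_def bind_assoc_pmf
          bind_return_pmf if_distrib[of "rr_continue _ pre v"] cong: if_cong)
  next
    case decrease_prev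
    show ?thesis
      unfolding maintain using decrease_prev
      by (simp add: bind_pmf_resample maintained_prev_def w'_def bind_assoc_pmf bind_return_pmf
          if_distrib[of "\<lambda>q. bind_pmf q (rr_continue _ pre v)"] cong: if_cong)
  next
    case decrease_other
    then show ?thesis
      unfolding maintain by (simp add: maintained_prev_def bind_return_pmf bind_return_pmf')
  qed
qed

lemma rr_maintain_rr_walk:
  fixes w :: "('v::finite) weights"
  assumes nonneg: "\<And>a b. w a b \<ge> 0" and pos: "\<Delta> > 0" and le: "\<not> inc \<Longrightarrow> \<Delta> \<le> w u v"
    and "distinct (pre @ [x])" "v \<notin> set pre"
  shows "bind_pmf (rr_walk CARD('v) w pre x) (rr_maintain w (u, v, inc, \<Delta>))
       = rr_walk CARD('v) (apply_update (u, v, inc, \<Delta>) w) pre x"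
  using assms(4,5)
proof (induction "CARD('v) - length pre" arbitrary: pre x rule: less_induct)
  case less
  let ?w' = "apply_update (u, v, inc, \<Delta>) w" and ?maintain = "rr_maintain w (u, v, inc, \<Delta>)"
  have "bind_pmf (rr_walk CARD('v) w pre x) ?maintain
      = bind_pmf (lt_choice w x) (\<lambda>p. bind_pmf (rr_continue w pre x p) ?maintain)"
    using less.prems by (simp add: rr_walk_CARD_eq_bind_rr_continue bind_assoc_pmf)
  also have "\<dots> = bind_pmf (lt_choice ?w' x) (rr_continue ?w' pre x)"
  proof (cases "x = v")
    case False
    have "bind_pmf (rr_continue w pre x p) ?maintain = rr_continue ?w' pre x p" for p
    proof (cases "p \<in> set (pre @ [x])")
      case True
      then show ?thesis
        using False less.prems by (simp add: rr_continue_def bind_return_pmf rr_maintain_off_path)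
    next
      case outside: False
      have "CARD('v) - length (pre @ [x]) < CARD('v) - length pre"
        using length_less_CARD_if_distinct[OF less.prems(1)] by simp
      moreover have "distinct ((pre @ [x]) @ [p])" "v \<notin> set (pre @ [x])"
        using outside False less.prems by auto
      ultimately show ?thesis using outside by (simp add: rr_continue_def less.hyps)
    qed
    then show ?thesis using False by (simp add: lt_choice_apply_update_other)
  next
    case True
    have "rr_continue w pre v p = rr_continue ?w' pre v p" for p
      by (intro rr_continue_choice_cong) (simp add: lt_choice_apply_update_other)
    then have "bind_pmf (lt_choice w x) (\<lambda>p. bind_pmf (rr_continue w pre x p) ?maintain)
        = bind_pmf (bind_pmf (lt_choice w v) (maintained_prev w (u, v, inc, \<Delta>)))
            (rr_continue ?w' pre v)"
      using True less.prems by (simp add: rr_maintain_rr_continue bind_assoc_pmf)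
    then show ?thesis using True nonneg pos le by (simp add: bind_lt_choice_maintained_prev)
  qed
  also have "\<dots> = rr_walk CARD('v) ?w' pre x"
    using less.prems by (simp add: rr_walk_CARD_eq_bind_rr_continue)
  finally show ?case .
qed

lemma rr_maintain_rr_sample:
  fixes w :: "('v::finite) weights"
  assumes "\<And>a b. w a b \<ge> 0" and "\<Delta> > 0" and "\<not> inc \<Longrightarrow> \<Delta> \<le> w u v"
  shows "bind_pmf (rr_sample w) (rr_maintain w (u, v, inc, \<Delta>))
       = rr_sample (apply_update (u, v, inc, \<Delta>) w)"
  unfolding rr_sample_def bind_assoc_pmf using assms by (simp add: rr_maintain_rr_walk)

text \<open>Reverse propagation driven by a live-edge sample: \<sigma> y is the previous node chosen by y.\<close>

fun live_walk :: "nat \<Rightarrow> ('v \<Rightarrow> 'v) \<Rightarrow> 'v list \<Rightarrow> 'v \<Rightarrow> 'v rr_state" where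
  "live_walk 0 \<sigma> pre x = (pre @ [x], x)"
| "live_walk (Suc k) \<sigma> pre x =
     (if \<sigma> x \<in> set (pre @ [x]) then (pre @ [x], \<sigma> x) else live_walk k \<sigma> (pre @ [x]) (\<sigma> x))"

fun is_live_path :: "('v \<Rightarrow> 'v) \<Rightarrow> 'v list \<Rightarrow> bool" where
  "is_live_path \<sigma> (a # b # zs) = (\<sigma> a = b \<and> is_live_path \<sigma> (b # zs))"
| "is_live_path \<sigma> _ = True"

lemma live_walk_cong:
  assumes "x \<notin> set pre" "\<And>y. y \<notin> set pre \<Longrightarrow> \<sigma> y = \<sigma>' y"
  shows "live_walk k \<sigma> pre x = live_walk k \<sigma>' pre x"
  using assms
proof (induction k arbitrary: pre x)
  case (Suc k)
  have "live_walk k \<sigma> (pre @ [x]) (\<sigma> x) = live_walk k \<sigma>' (pre @ [x]) (\<sigma> x)"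
    if "\<sigma> x \<notin> set (pre @ [x])"
    using that Suc.prems by (intro Suc.IH) auto
  then show ?case using Suc.prems by auto
qed simp

lemma rr_walk_eq_map_live_walk:
  fixes w :: "('v::finite) weights"
  assumes "x \<notin> set pre"
  shows "rr_walk k w pre x
       = map_pmf (\<lambda>\<sigma>. live_walk k \<sigma> pre x) (Pi_pmf (- set pre) undefined (lt_choice w))"
  using assms
proof (induction k arbitrary: pre x)
  case 0
  then show ?case by (simp add: map_pmf_const)
next
  case (Suc k)
  define A where "A = - set (pre @ [x])"
  have A: "- set pre = insert x A" "x \<notin> A" using Suc.prems by (auto simp: A_def)
  have step: "map_pmf (\<lambda>\<sigma>. live_walk (Suc k) (\<sigma>(x := p)) pre x) (Pi_pmf A undefined (lt_choice w))
      = (if p \<in> set (pre @ [x]) then return_pmf (pre @ [x], p) else rr_walk k w (pre @ [x]) p)"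
    for p
  proof (cases "p \<in> set (pre @ [x])")
    case False
    have "map_pmf (\<lambda>\<sigma>. live_walk (Suc k) (\<sigma>(x := p)) pre x) (Pi_pmf A undefined (lt_choice w))
        = map_pmf (\<lambda>\<sigma>. live_walk k \<sigma> (pre @ [x]) p) (Pi_pmf A undefined (lt_choice w))"
      using False by (intro map_pmf_cong refl) (auto intro: live_walk_cong)
    then show ?thesis using False Suc.IH[where pre = "pre @ [x]" and x = p] by (simp add: A_def)
  qed (simp add: map_pmf_const)
  have "map_pmf (\<lambda>\<sigma>. live_walk (Suc k) \<sigma> pre x) (Pi_pmf (- set pre) undefined (lt_choice w))
     = bind_pmf (lt_choice w x)
         (\<lambda>p. map_pmf (\<lambda>\<sigma>. live_walk (Suc k) (\<sigma>(x := p)) pre x) (Pi_pmf A undefined (lt_choice w)))"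
    unfolding A(1) Pi_pmf_insert[OF finite A(2)]
    by (simp add: map_pmf_def pair_pmf_def bind_assoc_pmf bind_return_pmf)
  also have "\<dots> = rr_walk (Suc k) w pre x"
    unfolding step by simp
  finally show ?case ..
qed

lemma live_walk_path:
  fixes pre :: "('v::finite) list"
  assumes "distinct (pre @ [x])" "CARD('v) \<le> length pre + k"
  shows "\<exists>ys. fst (live_walk k \<sigma> pre x) = pre @ x # ys \<and> is_live_path \<sigma> (x # ys)
           \<and> \<sigma> (last (x # ys)) \<in> set (pre @ x # ys)"
  using assms
proof (induction k arbitrary: pre x)
  case 0
  then show ?case using length_less_CARD_if_distinct[OF "0.prems"(1)] by simp
next
  case (Suc k)
  show ?case
  proof (cases "\<sigma> x \<in> set (pre @ [x])")
    case True
    then show ?thesis by (intro exI[of _ "[]"]) auto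
  next
    case False
    then obtain ys where "fst (live_walk k \<sigma> (pre @ [x]) (\<sigma> x)) = (pre @ [x]) @ \<sigma> x # ys"
      "is_live_path \<sigma> (\<sigma> x # ys)" "\<sigma> (last (\<sigma> x # ys)) \<in> set ((pre @ [x]) @ \<sigma> x # ys)"
      using Suc.prems Suc.IH[of "pre @ [x]" "\<sigma> x"] by auto
    then show ?thesis using False by (intro exI[of _ "\<sigma> x # ys"]) auto
  qed
qed

lemma set_closed_live_path:
  assumes "is_live_path \<sigma> (x # ys)" "\<sigma> (last (x # ys)) \<in> set (x # ys)"
  shows "set (x # ys) = range (\<lambda>j. (\<sigma> ^^ j) x)"
proof
  show "set (x # ys) \<subseteq> range (\<lambda>j. (\<sigma> ^^ j) x)"
    using assms(1)
  proof (induction ys arbitrary: x)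
    case (Cons b ys)
    then have "set (b # ys) \<subseteq> range (\<lambda>j. (\<sigma> ^^ j) (\<sigma> x))" by simp
    also have "\<dots> \<subseteq> range (\<lambda>j. (\<sigma> ^^ j) x)"
      by (auto simp: funpow_swap1[symmetric]) (metis comp_apply funpow.simps(2) rangeI)
    finally show ?case by (auto intro: range_eqI[of _ _ 0])
  qed (auto intro: range_eqI[of _ _ 0])
  have successor: "\<sigma> y \<in> set zs" if "is_live_path \<sigma> zs" "y \<in> set zs" "y \<noteq> last zs" for zs y
    using that by (induction \<sigma> zs rule: is_live_path.induct) auto
  have closed: "\<sigma> y \<in> set (x # ys)" if "y \<in> set (x # ys)" for y
    using assms that successor[of "x # ys" y] by (cases "y = last (x # ys)") auto
  have "(\<sigma> ^^ j) x \<in> set (x # ys)" for j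
  proof (induction j)
    case (Suc j)
    show ?case using closed[OF Suc.IH] by simp
  qed simp
  then show "range (\<lambda>j. (\<sigma> ^^ j) x) \<subseteq> set (x # ys)" by auto
qed

lemma set_live_walk_root:
  fixes \<sigma> :: "('v::finite) \<Rightarrow> 'v"
  shows "set (fst (live_walk CARD('v) \<sigma> [] r)) = range (\<lambda>j. (\<sigma> ^^ j) r)"
  using live_walk_path[of "[]" r "CARD('v)" \<sigma>] set_closed_live_path[of \<sigma> r] by auto

lemma measure_bind_pmf:
  "measure_pmf.prob (bind_pmf M f) X = (\<integral>x. measure_pmf.prob (f x) X \<partial>M)"
proof -
  have "ennreal (measure_pmf.prob (bind_pmf M f) X) = (\<integral>\<^sup>+x. ennreal (measure_pmf.prob (f x) X) \<partial>M)"
    by (simp add: measure_pmf.emeasure_eq_measure[symmetric])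
  also have "\<dots> = ennreal (\<integral>x. measure_pmf.prob (f x) X \<partial>M)"
    by (intro nn_integral_eq_integral)
       (auto intro!: measure_pmf.integrable_const_bound[where B = 1])
  finally show ?thesis by simp
qed

lemma prob_rr_walk_root_hits:
  fixes w :: "('v::finite) weights"
  shows "measure_pmf.prob (rr_walk CARD('v) w [] r) {R. set (fst R) \<inter> S \<noteq> {}}
       = measure_pmf.prob (live_edge_pmf w) {\<sigma>. r \<in> activated \<sigma> S}"
proof -
  have "rr_walk CARD('v) w [] r = map_pmf (\<lambda>\<sigma>. live_walk CARD('v) \<sigma> [] r) (live_edge_pmf w)"
    by (simp add: rr_walk_eq_map_live_walk live_edge_pmf_def)
  moreover have "set (fst (live_walk CARD('v) \<sigma> [] r)) \<inter> S \<noteq> {} \<longleftrightarrow> r \<in> activated \<sigma> S" for \<sigma>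
    unfolding set_live_walk_root activated_def by blast
  ultimately show ?thesis by simp
qed

lemma influence_eq_sum_prob_activated:
  fixes w :: "('v::finite) weights"
  shows "influence w S = (\<Sum>r\<in>UNIV. measure_pmf.prob (live_edge_pmf w) {\<sigma>. r \<in> activated \<sigma> S})"
proof -
  have "real (card (activated \<sigma> S)) = (\<Sum>r\<in>UNIV. indicator {\<sigma>. r \<in> activated \<sigma> S} \<sigma>)" for \<sigma>
    by (simp add: indicator_def)
  moreover have "integrable (live_edge_pmf w) f" for f :: "('v \<Rightarrow> 'v) \<Rightarrow> real"
    by (simp add: integrable_measure_pmf_finite)
  ultimately show ?thesis unfolding influence_def by simp
qed

lemma prob_rr_sample_hits:
  fixes w :: "('v::finite) weights"
  shows "measure_pmf.prob (rr_sample w) {R. set (fst R) \<inter> S \<noteq> {}} = influence w S / CARD('v)"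
  by (simp add: rr_sample_def measure_bind_pmf integral_pmf_of_set prob_rr_walk_root_hits
      influence_eq_sum_prob_activated)

lemma pmf_mapM_bind:
  "bind_pmf (pmf_mapM g xs) (pmf_mapM f) = pmf_mapM (\<lambda>x. bind_pmf (g x) f) xs"
proof (induction xs)
  case Nil
  then show ?case by (simp add: bind_return_pmf)
next
  case (Cons x xs)
  have "bind_pmf (pmf_mapM g (x # xs)) (pmf_mapM f)
      = bind_pmf (g x) (\<lambda>y. bind_pmf (pmf_mapM g xs)
          (\<lambda>ys. bind_pmf (f y) (\<lambda>z. map_pmf (\<lambda>zs. z # zs) (pmf_mapM f ys))))"
    by (simp add: bind_assoc_pmf bind_map_pmf)
  also have "\<dots> = bind_pmf (g x) (\<lambda>y. bind_pmf (f y)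
                    (\<lambda>z. map_pmf (\<lambda>zs. z # zs) (bind_pmf (pmf_mapM g xs) (pmf_mapM f))))"
    by (subst bind_commute_pmf) (simp add: map_bind_pmf)
  also have "\<dots> = pmf_mapM (\<lambda>x. bind_pmf (g x) f) (x # xs)"
    by (simp add: Cons.IH bind_assoc_pmf)
  finally show ?case .
qed

lemma length_set_pmf_pmf_mapM: "Rs \<in> set_pmf (pmf_mapM f xs) \<Longrightarrow> length Rs = length xs"
  by (induction xs arbitrary: Rs) auto

lemma nn_integral_pmf_mapM_count:
  "(\<integral>\<^sup>+Rs. ennreal (real (length (filter P Rs))) \<partial>pmf_mapM (\<lambda>_. D) xs)
     = of_nat (length xs) * emeasure D {x. P x}"
proof (induction xs)
  case (Cons x xs)
  have "ennreal (real (length (filter P (y # ys))))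
      = indicator {x. P x} y + ennreal (real (length (filter P ys)))"
    for y ys
    by (simp add: indicator_def ennreal_plus)
  then have "(\<integral>\<^sup>+Rs. ennreal (real (length (filter P Rs))) \<partial>pmf_mapM (\<lambda>_. D) (x # xs))
      = (\<integral>\<^sup>+y. indicator {x. P x} y + of_nat (length xs) * emeasure D {x. P x} \<partial>D)"
    by (simp add: nn_integral_add Cons.IH)
  also have "\<dots> = of_nat (length (x # xs)) * emeasure D {x. P x}"
    by (simp add: nn_integral_add distrib_right)
  finally show ?case .
qed simp

lemma expectation_F_R_iid:
  assumes "M > 0"
  shows "measure_pmf.expectation (pmf_mapM (\<lambda>_. D) [0..<M]) (\<lambda>Rs. F_R Rs S)
       = measure_pmf.prob D {R. set (fst R) \<inter> S \<noteq> {}}"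
proof -
  let ?hits = "\<lambda>R. set (fst R) \<inter> S \<noteq> {}"
  have "(\<integral>\<^sup>+Rs. ennreal (F_R Rs S) \<partial>pmf_mapM (\<lambda>_. D) [0..<M])
      = (\<integral>\<^sup>+Rs. ennreal (1 / real M) * ennreal (real (length (filter ?hits Rs)))
           \<partial>pmf_mapM (\<lambda>_. D) [0..<M])"
    by (intro nn_integral_cong_AE AE_pmfI)
       (auto simp: F_R_def length_set_pmf_pmf_mapM ennreal_mult'[symmetric])
  also have "\<dots> = ennreal (1 / real M) * of_nat M * emeasure D {R. ?hits R}"
    by (simp add: nn_integral_cmult nn_integral_pmf_mapM_count mult.assoc)
  also have "\<dots> = ennreal (measure_pmf.prob D {R. ?hits R})"
    using assms by (simp add: measure_pmf.emeasure_eq_measure ennreal_of_nat_eq_real_of_nat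
        ennreal_mult''[symmetric])
  finally show ?thesis
    by (subst integral_eq_nn_integral) (auto simp: F_R_def)
qed

lemma weights_at_Suc:
  "t < length ups \<Longrightarrow> weights_at w0 ups (Suc t) = apply_update (ups ! t) (weights_at w0 ups t)"
  by (simp add: weights_at_def take_Suc_conv_app_nth)

lemma weights_at_nonneg:
  assumes nonneg: "\<And>a b. w0 a b \<ge> 0"
    and valid_ups: "\<forall>i < length ups. case ups ! i of (u, v, inc, \<Delta>) \<Rightarrow>
                       \<Delta> > 0 \<and> (\<not> inc \<longrightarrow> \<Delta> \<le> weights_at w0 ups i u v)"
    and "t \<le> length ups"
  shows "weights_at w0 ups t a b \<ge> 0"
  using assms(3)
proof (induction t arbitrary: a b)
  case 0
  then show ?case using nonneg by (simp add: weights_at_def)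
next
  case (Suc t)
  obtain u v inc \<Delta> where upd: "ups ! t = (u, v, inc, \<Delta>)" by (cases "ups ! t") auto
  have "t < length ups" using Suc.prems by simp
  then have "\<Delta> > 0" "\<not> inc \<longrightarrow> \<Delta> \<le> weights_at w0 ups t u v" using valid_ups upd by force+
  then show ?case using Suc.IH[of a b] \<open>t < length ups\<close>
    by (auto simp: weights_at_Suc upd apply_update_apply)
qed

lemma rr_collection_eq_iid:
  fixes w0 :: "('v::finite) weights"
  assumes nonneg: "\<And>a b. w0 a b \<ge> 0"
    and valid_ups: "\<forall>i < length ups. case ups ! i of (u, v, inc, \<Delta>) \<Rightarrow>
                       \<Delta> > 0 \<and> (\<not> inc \<longrightarrow> \<Delta> \<le> weights_at w0 ups i u v)"
    and "t \<le> length ups"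
  shows "rr_collection w0 ups M t = pmf_mapM (\<lambda>_. rr_sample (weights_at w0 ups t)) [0..<M]"
  using assms(3)
proof (induction t)
  case 0
  then show ?case by (simp add: weights_at_def)
next
  case (Suc t)
  obtain u v inc \<Delta> where upd: "ups ! t = (u, v, inc, \<Delta>)" by (cases "ups ! t") auto
  have "t < length ups" using Suc.prems by simp
  then have "\<Delta> > 0" "\<not> inc \<Longrightarrow> \<Delta> \<le> weights_at w0 ups t u v" using valid_ups upd by force+
  moreover have "\<And>a b. weights_at w0 ups t a b \<ge> 0"
    using weights_at_nonneg[OF nonneg valid_ups] \<open>t < length ups\<close> by simp
  ultimately show ?case
    using Suc \<open>t < length ups\<close>
    by (simp add: upd pmf_mapM_bind rr_maintain_rr_sample weights_at_Suc)
qed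

theorem theorem4p1:
  fixes w0 :: "('v::finite) weights" and ups :: "'v update list"
    and M t :: nat and S :: "'v set"
  assumes no_edges: "\<forall>u v. u \<noteq> v \<longrightarrow> w0 u v = 0"
    and self_nonneg: "\<forall>v. w0 v v \<ge> 0"
    and valid_ups: "\<forall>i < length ups. case ups ! i of (u, v, inc, \<Delta>) \<Rightarrow>
                       \<Delta> > 0 \<and> (\<not> inc \<longrightarrow> \<Delta> \<le> weights_at w0 ups i u v)"
    and M_pos: "M > 0"
    and t_le: "t \<le> length ups"
  shows "measure_pmf.expectation (rr_collection w0 ups M t) (\<lambda>Rs. real CARD('v) * F_R Rs S)
         = influence (weights_at w0 ups t) S"
proof -
  have "w0 a b \<ge> 0" for a b
    using no_edges self_nonneg by (cases "a = b") auto
  then have "rr_collection w0 ups M t = pmf_mapM (\<lambda>_. rr_sample (weights_at w0 ups t)) [0..<M]"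
    using valid_ups t_le by (rule rr_collection_eq_iid)
  then show ?thesis
    using M_pos by (simp add: expectation_F_R_iid prob_rr_sample_hits)
qed

end
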